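(* Let $n\in\mathbb{N}$, $r\in\mathbb{N}_0$, let $u(x,t_r)$ be smooth on $\mathbb{R}^2$, and let polynomials (in $z$, coefficients smooth in $(x,t_r)$) $F_n,H_n$ (degree $n$, leading coefficient $1$), $G_{n-1}$, $\tilde F_r,\tilde H_r$ (degree $r$), $\tilde G_{r-1}$ ($\tilde G_{-1}=0$) satisfy for all $z$: $F_{n,x}=-iu_xF_n-2izG_{n-1}$, $H_{n,x}=iu_xH_n+2izG_{n-1}$, $G_{n-1,x}=i(H_n-F_n)$, $u_{xt_r}=-2i\tilde G_{r-1,x}-2(\tilde H_r-\tilde F_r)$, $\tilde F_{r,x}=-iu_x\tilde F_r-2iz\tilde G_{r-1}$, $\tilde H_{r,x}=iu_x\tilde H_r+2iz\tilde G_{r-1}$, and $z^2G_{n-1}^2+zF_nH_n=R_{2n+1}(z)=\prod_{m=0}^{2n}(z-E_m)$ independent of $(x,t_r)$, where $E_0=0$ and $E_m\neq0$ for $m\ge1$. Then $$F_{n,t_r}=2(G_{n-1}\tilde F_r-\tilde G_{r-1}F_n),\qquad zG_{n-1,t_r}=F_n\tilde H_r-\tilde F_rH_n,\qquad H_{n,t_r}=2(\tilde G_{r-1}H_n-G_{n-1}\tilde H_r),$$ and these three equations are equivalent to $V_{n,t_r}=[\tilde V_r,V_n]$.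
   Context: $V_n(z,x,t_r)=\begin{pmatrix}-G_{n-1}&\frac1zF_n\\ H_n&G_{n-1}\end{pmatrix}$ and $\tilde V_r(z,x,t_r)=\begin{pmatrix}-\tilde G_{r-1}&\frac1z\tilde F_r\\ \tilde H_r&\tilde G_{r-1}\end{pmatrix}$; $[A,B]=AB-BA$. *)

theory Defs
  imports "HOL-Analysis.Analysis"
begin

definition px :: "(real \<Rightarrow> real \<Rightarrow> complex) \<Rightarrow> real \<Rightarrow> real \<Rightarrow> complex" where
  "px f x t = vector_derivative (\<lambda>s. f s t) (at x)"

definition pt :: "(real \<Rightarrow> real \<Rightarrow> complex) \<Rightarrow> real \<Rightarrow> real \<Rightarrow> complex" where
  "pt f x t = vector_derivative (\<lambda>s. f x s) (at t)"

fun pd :: "bool list \<Rightarrow> (real \<Rightarrow> real \<Rightarrow> complex) \<Rightarrow> real \<Rightarrow> real \<Rightarrow> complex" where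
  "pd [] f = f"
| "pd (b # w) f = (if b then px (pd w f) else pt (pd w f))"

definition smooth2 :: "(real \<Rightarrow> real \<Rightarrow> complex) \<Rightarrow> bool" where
  "smooth2 f \<longleftrightarrow>
     (\<forall>w. (\<forall>x t. (\<lambda>s. pd w f s t) differentiable (at x)
                 \<and> (\<lambda>s. pd w f x s) differentiable (at t))
        \<and> continuous_on UNIV (\<lambda>p. pd w f (fst p) (snd p)))"

definition polyz :: "(nat \<Rightarrow> real \<Rightarrow> real \<Rightarrow> complex) \<Rightarrow> nat \<Rightarrow> complex \<Rightarrow> real \<Rightarrow> real \<Rightarrow> complex" where
  "polyz c d z x t = (\<Sum>k<d. c k x t * z ^ k)"

definition mat2 :: "complex \<Rightarrow> complex \<Rightarrow> complex \<Rightarrow> complex \<Rightarrow> complex^2^2" where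
  "mat2 a b c d = (\<chi> i j. if i = 1 then (if j = 1 then a else b) else (if j = 1 then c else d))"

definition mat_pt :: "(real \<Rightarrow> real \<Rightarrow> complex^2^2) \<Rightarrow> real \<Rightarrow> real \<Rightarrow> complex^2^2" where
  "mat_pt M x t = (\<chi> i j. pt (\<lambda>x' t'. M x' t' $ i $ j) x t)"

definition commut :: "complex^2^2 \<Rightarrow> complex^2^2 \<Rightarrow> complex^2^2" where
  "commut A B = A ** B - B ** A"

end

theory Submission imports Defs "HOL-Computational_Algebra.Polynomial" begin

text \<open>
  Let D_F = F_t - 2(G Ft - Gt F), D_G = z G_t - (F Ht - Ft H), D_H = H_t - 2(Gt H - G Ht) be
  the defects of the three claimed equations; for fixed (x, t) they are polynomials in z.
  The x-equations, the equation for u_xt and Schwarz's theorem give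
  (D_F)_x = -i u_x D_F - 2i D_G and (D_G)_x = i z (D_H - D_F), and differentiating the
  t-independent quantity z^2 G^2 + z F H in t gives 2 G D_G + F D_H + H D_F = 0.
  Suppose all coefficients above z^d of the defects vanish. The coefficient of z^(d+1) of
  (D_G)_x gives (D_H)_d = (D_F)_d; since F and H are monic of degree n and deg G < n, the
  coefficient of z^(n+d) of the relation gives (D_H)_d + (D_F)_d = 0; then the coefficient
  of z^d of (D_F)_x gives (D_G)_d = 0. By descending induction all defects vanish.
  For z \<noteq> 0 the matrix equation is the three equations read entrywise.
\<close>

lemma pt_eq_integral_pt_px:
  fixes f :: "real \<Rightarrow> real \<Rightarrow> complex"
  assumes dx: "\<And>x t. (\<lambda>s. f s t) differentiable (at x)"
    and dt: "\<And>x t. (\<lambda>s. f x s) differentiable (at t)"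
    and dxt: "\<And>x t. (\<lambda>s. px f x s) differentiable (at t)"
    and cx: "continuous_on UNIV (\<lambda>p. px f (fst p) (snd p))"
    and cxt: "continuous_on UNIV (\<lambda>p. pt (px f) (fst p) (snd p))"
    and "a \<le> b"
  shows "pt f b t = pt f a t + integral {a..b} (\<lambda>s. pt (px f) s t)"
proof -
  have ftc: "f b \<tau> = f a \<tau> + integral {a..b} (\<lambda>s. px f s \<tau>)" for \<tau>
  proof -
    have "((\<lambda>s. px f s \<tau>) has_integral (f b \<tau> - f a \<tau>)) {a..b}"
      using \<open>a \<le> b\<close> dx
      by (intro fundamental_theorem_of_calculus)
         (auto intro: has_vector_derivative_at_within simp: px_def vector_derivative_works[symmetric])
    then show ?thesis by (simp add: integral_unique)
  qed
  have "((\<lambda>\<tau>. integral (cbox a b) (\<lambda>s. px f s \<tau>)) has_vector_derivative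
      integral (cbox a b) (\<lambda>s. pt (px f) s t)) (at t within UNIV)"
  proof (rule leibniz_rule_vector_derivative
      [where f = "\<lambda>\<tau> s. px f s \<tau>" and fx = "\<lambda>\<tau> s. pt (px f) s \<tau>"])
    show "((\<lambda>\<tau>. px f s \<tau>) has_vector_derivative pt (px f) s \<tau>) (at \<tau> within UNIV)" for \<tau> s
      unfolding pt_def using dxt vector_derivative_works by blast
    show "(\<lambda>s. px f s \<tau>) integrable_on cbox a b" for \<tau>
    proof (rule integrable_continuous)
      have "continuous_on UNIV (\<lambda>s. px f s \<tau>)"
        using continuous_on_compose2[OF cx, of UNIV "\<lambda>s. (s, \<tau>)"] by (simp add: continuous_on_Pair)
      then show "continuous_on (cbox a b) (\<lambda>s. px f s \<tau>)" by (rule continuous_on_subset) auto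
    qed
    have "continuous_on UNIV (\<lambda>p. pt (px f) (snd p) (fst p))"
      using continuous_on_compose2[OF cxt, of UNIV "\<lambda>p. (snd p, fst p)"]
      by (simp add: continuous_on_Pair continuous_on_snd continuous_on_fst continuous_on_id)
    then have "continuous_on UNIV (\<lambda>(\<tau>, s). pt (px f) s \<tau>)"
      by (simp add: case_prod_beta')
    then show "continuous_on (UNIV \<times> cbox a b) (\<lambda>(\<tau>, s). pt (px f) s \<tau>)"
      by (rule continuous_on_subset) auto
  qed auto
  then have "((\<lambda>\<tau>. f a \<tau> + integral {a..b} (\<lambda>s. px f s \<tau>)) has_vector_derivative
      pt f a t + integral {a..b} (\<lambda>s. pt (px f) s t)) (at t)"
    using dt by (intro has_vector_derivative_add) (simp_all add: pt_def vector_derivative_works[symmetric])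
  then show ?thesis
    unfolding pt_def[of f b t] ftc[abs_def] by (rule vector_derivative_at)
qed

lemma px_pt_eq_pt_px:
  fixes f :: "real \<Rightarrow> real \<Rightarrow> complex"
  assumes dx: "\<And>x t. (\<lambda>s. f s t) differentiable (at x)"
    and dt: "\<And>x t. (\<lambda>s. f x s) differentiable (at t)"
    and dxt: "\<And>x t. (\<lambda>s. px f x s) differentiable (at t)"
    and cx: "continuous_on UNIV (\<lambda>p. px f (fst p) (snd p))"
    and cxt: "continuous_on UNIV (\<lambda>p. pt (px f) (fst p) (snd p))"
  shows "px (pt f) x t = pt (px f) x t"
proof -
  define a where "a = x - 1"
  have cont: "continuous_on {a..x + 1} (\<lambda>s. pt (px f) s t)"
    using continuous_on_compose2[OF cxt, of "{a..x + 1}" "\<lambda>s. (s, t)"]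
    by (simp add: continuous_on_Pair)
  have "((\<lambda>s. integral {a..s} (\<lambda>\<sigma>. pt (px f) \<sigma> t)) has_vector_derivative pt (px f) x t) (at x)"
    using integral_has_vector_derivative[OF cont, of x] at_within_interior[of x "{a..x + 1}"]
    by (simp add: a_def)
  then have "((\<lambda>s. pt f a t + integral {a..s} (\<lambda>\<sigma>. pt (px f) \<sigma> t)) has_vector_derivative
      pt (px f) x t) (at x)"
    by (intro derivative_eq_intros) auto
  then have "((\<lambda>s. pt f s t) has_vector_derivative pt (px f) x t) (at x)"
  proof (rule has_vector_derivative_transform_within_open[where S = "{a<..}"])
    show "pt f a t + integral {a..s} (\<lambda>\<sigma>. pt (px f) \<sigma> t) = pt f s t" if "s \<in> {a<..}" for s
      using pt_eq_integral_pt_px[OF dx dt dxt cx cxt, of a s] that by simp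
  qed (simp_all add: a_def)
  then show ?thesis
    unfolding px_def[of "pt f"] by (rule vector_derivative_at)
qed

lemma smooth2_px_pt_eq_pt_px:
  assumes "smooth2 f"
  shows "px (pt f) x t = pt (px f) x t"
proof -
  have "(\<lambda>s. pd w f s t) differentiable (at x)" "(\<lambda>s. pd w f x s) differentiable (at t)"
       "continuous_on UNIV (\<lambda>p. pd w f (fst p) (snd p))" for w x t
    using assms unfolding smooth2_def by blast+
  from this[of "[]"] this[of "[True]"] this[of "[False, True]"] show ?thesis
    by (intro px_pt_eq_pt_px) auto
qed

definition x_differentiable :: "(real \<Rightarrow> real \<Rightarrow> complex) \<Rightarrow> bool" where
  "x_differentiable f \<longleftrightarrow> (\<forall>x t. (\<lambda>s. f s t) differentiable (at x))"

definition t_differentiable :: "(real \<Rightarrow> real \<Rightarrow> complex) \<Rightarrow> bool" where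
  "t_differentiable f \<longleftrightarrow> (\<forall>x t. (\<lambda>s. f x s) differentiable (at t))"

lemma x_differentiable_const [simp]: "x_differentiable (\<lambda>x t. c)"
  and x_differentiable_add [simp]:
    "x_differentiable f \<Longrightarrow> x_differentiable g \<Longrightarrow> x_differentiable (\<lambda>x t. f x t + g x t)"
  and x_differentiable_diff [simp]:
    "x_differentiable f \<Longrightarrow> x_differentiable g \<Longrightarrow> x_differentiable (\<lambda>x t. f x t - g x t)"
  and x_differentiable_mult [simp]:
    "x_differentiable f \<Longrightarrow> x_differentiable g \<Longrightarrow> x_differentiable (\<lambda>x t. f x t * g x t)"
  by (simp_all add: x_differentiable_def)

lemma x_differentiable_sum [simp]:
  "(\<And>k. x_differentiable (f k)) \<Longrightarrow> x_differentiable (\<lambda>x t. \<Sum>k\<in>A. f k x t)"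
  by (cases "finite A") (auto simp: x_differentiable_def intro!: differentiable_sum)

lemma t_differentiable_const [simp]: "t_differentiable (\<lambda>x t. c)"
  and t_differentiable_add [simp]:
    "t_differentiable f \<Longrightarrow> t_differentiable g \<Longrightarrow> t_differentiable (\<lambda>x t. f x t + g x t)"
  and t_differentiable_diff [simp]:
    "t_differentiable f \<Longrightarrow> t_differentiable g \<Longrightarrow> t_differentiable (\<lambda>x t. f x t - g x t)"
  and t_differentiable_mult [simp]:
    "t_differentiable f \<Longrightarrow> t_differentiable g \<Longrightarrow> t_differentiable (\<lambda>x t. f x t * g x t)"
  and t_differentiable_minus [simp]: "t_differentiable f \<Longrightarrow> t_differentiable (\<lambda>x t. - f x t)"
  by (simp_all add: t_differentiable_def)

lemma t_differentiable_sum [simp]: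
  "(\<And>k. t_differentiable (f k)) \<Longrightarrow> t_differentiable (\<lambda>x t. \<Sum>k\<in>A. f k x t)"
  by (cases "finite A") (auto simp: t_differentiable_def intro!: differentiable_sum)

lemma px_const [simp]: "px (\<lambda>x t. c) x t = 0"
  and px_add [simp]: "x_differentiable f \<Longrightarrow> x_differentiable g \<Longrightarrow>
    px (\<lambda>x t. f x t + g x t) x t = px f x t + px g x t"
  and px_diff [simp]: "x_differentiable f \<Longrightarrow> x_differentiable g \<Longrightarrow>
    px (\<lambda>x t. f x t - g x t) x t = px f x t - px g x t"
  and px_mult [simp]: "x_differentiable f \<Longrightarrow> x_differentiable g \<Longrightarrow>
    px (\<lambda>x t. f x t * g x t) x t = f x t * px g x t + px f x t * g x t"
  by (simp_all add: x_differentiable_def px_def)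

lemma px_sum [simp]: "(\<And>k. x_differentiable (f k)) \<Longrightarrow>
    px (\<lambda>x t. \<Sum>k\<in>A. f k x t) x t = (\<Sum>k\<in>A. px (f k) x t)"
  unfolding x_differentiable_def px_def
  by (cases "finite A")
     (auto intro!: vector_derivative_at has_vector_derivative_sum simp: vector_derivative_works[symmetric])

lemma pt_const [simp]: "pt (\<lambda>x t. c) x t = 0"
  and pt_add [simp]: "t_differentiable f \<Longrightarrow> t_differentiable g \<Longrightarrow>
    pt (\<lambda>x t. f x t + g x t) x t = pt f x t + pt g x t"
  and pt_diff [simp]: "t_differentiable f \<Longrightarrow> t_differentiable g \<Longrightarrow>
    pt (\<lambda>x t. f x t - g x t) x t = pt f x t - pt g x t"
  and pt_mult [simp]: "t_differentiable f \<Longrightarrow> t_differentiable g \<Longrightarrow>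
    pt (\<lambda>x t. f x t * g x t) x t = f x t * pt g x t + pt f x t * g x t"
  and pt_minus [simp]: "t_differentiable f \<Longrightarrow> pt (\<lambda>x t. - f x t) x t = - pt f x t"
  by (simp_all add: t_differentiable_def pt_def)

lemma pt_divide_const [simp]: "t_differentiable f \<Longrightarrow> pt (\<lambda>x t. f x t / c) x t = pt f x t / c"
  unfolding t_differentiable_def pt_def
  by (intro vector_derivative_at has_vector_derivative_divide) (simp add: vector_derivative_works[symmetric])

lemma pt_sum [simp]: "(\<And>k. t_differentiable (f k)) \<Longrightarrow>
    pt (\<lambda>x t. \<Sum>k\<in>A. f k x t) x t = (\<Sum>k\<in>A. pt (f k) x t)"
  unfolding t_differentiable_def pt_def
  by (cases "finite A")
     (auto intro!: vector_derivative_at has_vector_derivative_sum simp: vector_derivative_works[symmetric])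

lemma smooth2_differentiable:
  assumes "smooth2 f"
  shows "x_differentiable f" "t_differentiable f" "x_differentiable (pt f)" "t_differentiable (px f)"
  using assms[unfolded smooth2_def, THEN spec, of "[]"] assms[unfolded smooth2_def, THEN spec, of "[True]"]
    assms[unfolded smooth2_def, THEN spec, of "[False]"]
  by (auto simp: x_differentiable_def t_differentiable_def)

lemma x_differentiable_polyz [simp]: "(\<And>k. x_differentiable (c k)) \<Longrightarrow> x_differentiable (polyz c d z)"
  and t_differentiable_polyz [simp]: "(\<And>k. t_differentiable (c k)) \<Longrightarrow> t_differentiable (polyz c d z)"
  by (simp_all add: polyz_def[abs_def])

lemma px_polyz: "(\<And>k. x_differentiable (c k)) \<Longrightarrow> px (polyz c d z) = polyz (\<lambda>k. px (c k)) d z"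
  and pt_polyz: "(\<And>k. t_differentiable (c k)) \<Longrightarrow> pt (polyz c d z) = polyz (\<lambda>k. pt (c k)) d z"
  by (simp_all add: fun_eq_iff polyz_def[abs_def])

definition polyz_poly ::
    "(nat \<Rightarrow> real \<Rightarrow> real \<Rightarrow> complex) \<Rightarrow> nat \<Rightarrow> real \<Rightarrow> real \<Rightarrow> complex poly" where
  "polyz_poly c d x t = (\<Sum>k<d. monom (c k x t) k)"

lemma poly_polyz_poly [simp]: "poly (polyz_poly c d x t) z = polyz c d z x t"
  by (simp add: polyz_poly_def polyz_def poly_sum poly_monom)

lemma coeff_polyz_poly [simp]: "coeff (polyz_poly c d x t) k = (if k < d then c k x t else 0)"
  by (simp add: polyz_poly_def coeff_sum)

lemma degree_polyz_poly: "degree (polyz_poly c d x t) \<le> d - 1"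
  by (rule degree_le) auto

definition x_differentiable_coeffs :: "(real \<Rightarrow> real \<Rightarrow> complex poly) \<Rightarrow> bool" where
  "x_differentiable_coeffs P \<longleftrightarrow> (\<forall>k. x_differentiable (\<lambda>x t. coeff (P x t) k))"

lemma x_differentiable_coeffs_polyz_poly [simp]:
  "(\<And>k. x_differentiable (c k)) \<Longrightarrow> x_differentiable_coeffs (polyz_poly c d)"
  unfolding x_differentiable_coeffs_def coeff_polyz_poly
proof
  show "x_differentiable (\<lambda>x t. if k < d then c k x t else 0)" if "\<And>k. x_differentiable (c k)" for k
    using that by (cases "k < d") simp_all
qed

lemma x_differentiable_coeffs_diff [simp]: "x_differentiable_coeffs P \<Longrightarrow> x_differentiable_coeffs Q \<Longrightarrow>
    x_differentiable_coeffs (\<lambda>x t. P x t - Q x t)"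
  and x_differentiable_coeffs_mult [simp]: "x_differentiable_coeffs P \<Longrightarrow> x_differentiable_coeffs Q \<Longrightarrow>
    x_differentiable_coeffs (\<lambda>x t. P x t * Q x t)"
  and x_differentiable_coeffs_smult [simp]: "x_differentiable_coeffs P \<Longrightarrow>
    x_differentiable_coeffs (\<lambda>x t. smult c (P x t))"
  by (simp_all add: x_differentiable_coeffs_def coeff_mult)

lemma x_differentiable_coeffs_pCons_0 [simp]:
  assumes "x_differentiable_coeffs P"
  shows "x_differentiable_coeffs (\<lambda>x t. pCons 0 (P x t))"
  unfolding x_differentiable_coeffs_def
proof
  show "x_differentiable (\<lambda>x t. coeff (pCons 0 (P x t)) k)" for k
    using assms by (cases k) (simp_all add: x_differentiable_coeffs_def)
qed

definition bounded_degree :: "(real \<Rightarrow> real \<Rightarrow> 'a::zero poly) \<Rightarrow> bool" where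
  "bounded_degree P \<longleftrightarrow> (\<exists>N. \<forall>x t. degree (P x t) \<le> N)"

lemma bounded_degree_polyz_poly [simp]: "bounded_degree (polyz_poly c d)"
  unfolding bounded_degree_def by (blast intro: degree_polyz_poly)

lemma bounded_degree_diff [simp]:
  fixes P Q :: "real \<Rightarrow> real \<Rightarrow> 'a::ab_group_add poly"
  assumes "bounded_degree P" "bounded_degree Q"
  shows "bounded_degree (\<lambda>x t. P x t - Q x t)"
proof -
  from assms obtain M N where "\<And>x t. degree (P x t) \<le> M" "\<And>x t. degree (Q x t) \<le> N"
    by (auto simp: bounded_degree_def)
  then have "degree (P x t - Q x t) \<le> max M N" for x t
    by (intro degree_diff_le) (auto intro: le_max_iff_disj[THEN iffD2])
  then show ?thesis by (auto simp: bounded_degree_def)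
qed

lemma bounded_degree_mult [simp]:
  fixes P Q :: "real \<Rightarrow> real \<Rightarrow> 'a::comm_semiring_0 poly"
  assumes "bounded_degree P" "bounded_degree Q"
  shows "bounded_degree (\<lambda>x t. P x t * Q x t)"
proof -
  from assms obtain M N where "\<And>x t. degree (P x t) \<le> M" "\<And>x t. degree (Q x t) \<le> N"
    by (auto simp: bounded_degree_def)
  then have "degree (P x t * Q x t) \<le> M + N" for x t
    by (meson add_mono degree_mult_le order_trans)
  then show ?thesis by (auto simp: bounded_degree_def)
qed

lemma bounded_degree_smult [simp]:
  "bounded_degree P \<Longrightarrow> bounded_degree (\<lambda>x t. smult c (P x t))"
  unfolding bounded_degree_def by (meson degree_smult_le order_trans)

lemma bounded_degree_pCons [simp]: "bounded_degree P \<Longrightarrow> bounded_degree (\<lambda>x t. pCons a (P x t))"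
  unfolding bounded_degree_def by (meson Suc_le_mono degree_pCons_le order_trans)

lemma poly_eq_polyz_coeff:
  assumes "\<And>x t. degree (P x t) < d"
  shows "(\<lambda>x t. poly (P x t) z) = polyz (\<lambda>k x t. coeff (P x t) k) d z"
proof (intro ext)
  fix x t
  show "poly (P x t) z = polyz (\<lambda>k x t. coeff (P x t) k) d z x t"
    unfolding poly_altdef polyz_def
    by (rule sum.mono_neutral_left) (use assms[of x t] in \<open>auto simp: coeff_eq_0\<close>)
qed

lemma px_coeff_eq_coeff:
  assumes diff: "x_differentiable_coeffs P" and bounded: "bounded_degree P"
    and px_poly: "\<And>z. px (\<lambda>x t. poly (P x t) z) x t = poly q z"
  shows "px (\<lambda>x t. coeff (P x t) k) x t = coeff q k"
proof -
  obtain d where deg: "\<And>x t. degree (P x t) < d"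
    using bounded unfolding bounded_degree_def by (meson le_imp_less_Suc)
  have "poly q z = poly (polyz_poly (\<lambda>k. px (\<lambda>x t. coeff (P x t) k)) d x t) z" for z
    using diff by (simp add: px_poly[symmetric] poly_eq_polyz_coeff[OF deg] px_polyz x_differentiable_coeffs_def)
  then have "q = polyz_poly (\<lambda>k. px (\<lambda>x t. coeff (P x t) k)) d x t"
    by (simp add: poly_eq_poly_eq_iff[symmetric] fun_eq_iff)
  moreover have "(\<lambda>x t. coeff (P x t) k) = (\<lambda>x t. 0)" if "d \<le> k"
  proof (intro ext coeff_eq_0)
    show "degree (P x t) < k" for x t
      using deg[of x t] that by linarith
  qed
  ultimately show ?thesis by (cases "k < d") auto
qed

lemma poly_eq_0_if_vanishes_off_0:
  fixes p :: "'a::{idom, ring_char_0} poly"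
  assumes "\<And>z. z \<noteq> 0 \<Longrightarrow> poly p z = 0"
  shows "p = 0"
proof -
  have "poly (pCons 0 p) z = 0" for z
    using assms[of z] by (cases "z = 0") simp_all
  then show ?thesis by (metis pCons_eq_0_iff poly_all_0_iff_0)
qed

lemma coeff_mult_at_degree_bounds:
  fixes p q :: "'a::comm_semiring_0 poly"
  assumes "degree p \<le> m" "degree q \<le> k"
  shows "coeff (p * q) (m + k) = coeff p m * coeff q k"
proof (cases "degree p = m \<and> degree q = k")
  case True
  then show ?thesis using coeff_mult_degree_sum by blast
next
  case False
  then have "degree (p * q) < m + k"
    using assms degree_mult_le[of p q] by linarith
  with False assms show ?thesis by (auto simp: coeff_eq_0 le_less)
qed

lemma coeffs_vanish_by_descent:
  fixes PA PB PC PF PG PH :: "real \<Rightarrow> real \<Rightarrow> complex poly" and w :: "real \<Rightarrow> real \<Rightarrow> complex"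
  assumes bounded: "bounded_degree PA" "bounded_degree PB" "bounded_degree PC"
    and F: "\<And>x t. degree (PF x t) \<le> n" "\<And>x t. coeff (PF x t) n = 1"
    and H: "\<And>x t. degree (PH x t) \<le> n" "\<And>x t. coeff (PH x t) n = 1"
    and G: "\<And>x t. degree (PG x t) < n"
    and A_x: "\<And>k x t. px (\<lambda>x t. coeff (PA x t) (Suc k)) x t = \<i> * (coeff (PC x t) k - coeff (PB x t) k)"
    and B_x: "\<And>k x t. px (\<lambda>x t. coeff (PB x t) k) x t
      = w x t * coeff (PB x t) k - 2 * \<i> * coeff (PA x t) k"
    and relation: "\<And>x t. smult 2 (PG x t * PA x t) + PF x t * PC x t + PH x t * PB x t = 0"
  shows "PA x t = 0 \<and> PB x t = 0 \<and> PC x t = 0"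
proof -
  define vanish where "vanish d \<longleftrightarrow>
    (\<forall>k\<ge>d. \<forall>x t. coeff (PA x t) k = 0 \<and> coeff (PB x t) k = 0 \<and> coeff (PC x t) k = 0)" for d
  obtain a b c where deg: "\<And>x t. degree (PA x t) \<le> a" "\<And>x t. degree (PB x t) \<le> b"
      "\<And>x t. degree (PC x t) \<le> c"
    using bounded by (auto simp: bounded_degree_def)
  have "vanish (Suc (a + b + c))"
    unfolding vanish_def
  proof (intro allI impI conjI coeff_eq_0)
    fix k x t assume "Suc (a + b + c) \<le> k"
    with deg[of x t] show "degree (PA x t) < k" "degree (PB x t) < k" "degree (PC x t) < k"
      by linarith+
  qed
  then have "vanish 0"
  proof (rule inc_induct[OF le0])
    fix d assume "vanish (Suc d)"
    then have deg_d: "degree (PA x t) \<le> d" "degree (PB x t) \<le> d" "degree (PC x t) \<le> d"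
      and A_Suc_d: "coeff (PA x t) (Suc d) = 0" for x t
      by (auto simp: vanish_def intro!: degree_le)
    have "coeff (PC x t) d = coeff (PB x t) d" for x t
      using A_x[of d x t] by (simp add: A_Suc_d)
    moreover have "coeff (PC x t) d + coeff (PB x t) d = 0" for x t
    proof -
      have "coeff (PG x t * PA x t) (n + d) = 0"
        using degree_mult_le[of "PG x t" "PA x t"] G[of x t] deg_d(1)[of x t] by (intro coeff_eq_0) linarith
      then show ?thesis
        using arg_cong[OF relation[of x t], of "\<lambda>p. coeff p (n + d)"]
        by (simp add: coeff_mult_at_degree_bounds F H deg_d)
    qed
    ultimately have B_d: "coeff (PB x t) d = 0" and C_d: "coeff (PC x t) d = 0" for x t
      by auto
    have "coeff (PA x t) d = 0" for x t
      using B_x[of d x t] by (simp add: B_d)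
    with \<open>vanish (Suc d)\<close> B_d C_d show "vanish d"
      unfolding vanish_def by (metis Suc_le_eq le_neq_implies_less)
  qed
  then show ?thesis
    by (auto simp: vanish_def intro: poly_eqI)
qed

lemma defects_vanish_by_descent:
  fixes A B C :: "complex \<Rightarrow> real \<Rightarrow> real \<Rightarrow> complex"
    and PA PB PC PF PG PH :: "real \<Rightarrow> real \<Rightarrow> complex poly"
    and w :: "real \<Rightarrow> real \<Rightarrow> complex"
  assumes A: "\<And>z. A z = (\<lambda>x t. poly (PA x t) z)"
    and B: "\<And>z. B z = (\<lambda>x t. poly (PB x t) z)"
    and C: "\<And>z. C z = (\<lambda>x t. poly (PC x t) z)"
    and diff: "x_differentiable_coeffs PA" "x_differentiable_coeffs PB"
    and bounded: "bounded_degree PA" "bounded_degree PB" "bounded_degree PC"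
    and F: "\<And>x t. degree (PF x t) \<le> n" "\<And>x t. coeff (PF x t) n = 1"
    and H: "\<And>x t. degree (PH x t) \<le> n" "\<And>x t. coeff (PH x t) n = 1"
    and G: "\<And>x t. degree (PG x t) < n"
    and A_x: "\<And>z x t. px (A z) x t = \<i> * z * (C z x t - B z x t)"
    and B_x: "\<And>z x t. px (B z) x t = w x t * B z x t - 2 * \<i> * A z x t"
    and relation: "\<And>z x t. z \<noteq> 0 \<Longrightarrow>
      2 * poly (PG x t) z * A z x t + poly (PF x t) z * C z x t + poly (PH x t) z * B z x t = 0"
  shows "A z x t = 0 \<and> B z x t = 0 \<and> C z x t = 0"
proof -
  have "PA x t = 0 \<and> PB x t = 0 \<and> PC x t = 0"
  proof (rule coeffs_vanish_by_descent[OF bounded F H G])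
    show "px (\<lambda>x t. coeff (PA x t) (Suc k)) x t = \<i> * (coeff (PC x t) k - coeff (PB x t) k)" for k x t
    proof -
      have "px (\<lambda>x t. poly (PA x t) z) x t = poly ([:0, \<i>:] * (PC x t - PB x t)) z" for z
        using A_x[of z x t] by (simp add: A B C algebra_simps)
      then have "px (\<lambda>x t. coeff (PA x t) (Suc k)) x t = coeff ([:0, \<i>:] * (PC x t - PB x t)) (Suc k)"
        by (rule px_coeff_eq_coeff[OF diff(1) bounded(1)])
      then show ?thesis by simp
    qed
    show "px (\<lambda>x t. coeff (PB x t) k) x t = w x t * coeff (PB x t) k - 2 * \<i> * coeff (PA x t) k" for k x t
    proof -
      have "px (\<lambda>x t. poly (PB x t) z) x t = poly (smult (w x t) (PB x t) - smult (2 * \<i>) (PA x t)) z" for z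
        using B_x[of z x t] by (simp add: A B)
      then have "px (\<lambda>x t. coeff (PB x t) k) x t = coeff (smult (w x t) (PB x t) - smult (2 * \<i>) (PA x t)) k"
        by (rule px_coeff_eq_coeff[OF diff(2) bounded(2)])
      then show ?thesis by simp
    qed
    show "smult 2 (PG x t * PA x t) + PF x t * PC x t + PH x t * PB x t = 0" for x t
      by (rule poly_eq_0_if_vanishes_off_0) (use relation in \<open>simp add: A B C mult.assoc\<close>)
  qed
  then show ?thesis by (simp add: A B C)
qed

lemma px_pt_polyz:
  assumes "\<And>k. smooth2 (c k)"
  shows "px (pt (polyz c d z)) x t = pt (px (polyz c d z)) x t"
  using assms
  by (simp add: px_polyz pt_polyz smooth2_differentiable polyz_def smooth2_px_pt_eq_pt_px)

lemma zero_curvature_iff: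
  fixes F G H :: "real \<Rightarrow> real \<Rightarrow> complex" and a b c z :: complex
  assumes "z \<noteq> 0" "t_differentiable F" "t_differentiable G" "t_differentiable H"
  shows "mat_pt (\<lambda>x' t'. mat2 (- G x' t') (F x' t' / z) (H x' t') (G x' t')) x t
           = commut (mat2 (- b) (a / z) c b) (mat2 (- G x t) (F x t / z) (H x t) (G x t))
    \<longleftrightarrow> pt F x t = 2 * (G x t * a - b * F x t)
        \<and> z * pt G x t = F x t * c - a * H x t
        \<and> pt H x t = 2 * (b * H x t - G x t * c)"
  using assms
  by (simp add: mat_pt_def commut_def mat2_def vec_eq_iff forall_2 matrix_matrix_mult_def sum_2
      field_simps) (auto simp: algebra_simps)

locale lax_pair_polynomials =
  fixes n r :: nat
    and u :: "real \<Rightarrow> real \<Rightarrow> complex"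
    and f g h ft gt ht :: "nat \<Rightarrow> real \<Rightarrow> real \<Rightarrow> complex"
    and F G H Ft Gt Ht :: "complex \<Rightarrow> real \<Rightarrow> real \<Rightarrow> complex"
    and R :: "complex \<Rightarrow> complex"
  assumes F_def: "F = polyz f (Suc n)" and G_def: "G = polyz g n" and H_def: "H = polyz h (Suc n)"
    and Ft_def: "Ft = polyz ft (Suc r)" and Gt_def: "Gt = polyz gt r" and Ht_def: "Ht = polyz ht (Suc r)"
    and n_pos: "n \<ge> 1"
    and u_smooth: "smooth2 u"
    and coeff_smooth: "\<And>k. smooth2 (f k) \<and> smooth2 (g k) \<and> smooth2 (h k)
                             \<and> smooth2 (ft k) \<and> smooth2 (gt k) \<and> smooth2 (ht k)"
    and F_monic: "\<And>x t. f n x t = 1"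
    and H_monic: "\<And>x t. h n x t = 1"
    and eqF: "\<And>z x t. px (F z) x t = - \<i> * px u x t * F z x t - 2 * \<i> * z * G z x t"
    and eqH: "\<And>z x t. px (H z) x t = \<i> * px u x t * H z x t + 2 * \<i> * z * G z x t"
    and eqG: "\<And>z x t. px (G z) x t = \<i> * (H z x t - F z x t)"
    and equ: "\<And>z x t. pt (px u) x t = - 2 * \<i> * px (Gt z) x t - 2 * (Ht z x t - Ft z x t)"
    and eqFt: "\<And>z x t. px (Ft z) x t = - \<i> * px u x t * Ft z x t - 2 * \<i> * z * Gt z x t"
    and eqHt: "\<And>z x t. px (Ht z) x t = \<i> * px u x t * Ht z x t + 2 * \<i> * z * Gt z x t"
    and invariant: "\<And>z x t. z\<^sup>2 * (G z x t)\<^sup>2 + z * F z x t * H z x t = R z"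
begin

lemma coeff_differentiable [simp]:
  "x_differentiable (f k)" "x_differentiable (g k)" "x_differentiable (h k)"
  "x_differentiable (ft k)" "x_differentiable (gt k)" "x_differentiable (ht k)"
  "t_differentiable (f k)" "t_differentiable (g k)" "t_differentiable (h k)"
  "x_differentiable (pt (f k))" "x_differentiable (pt (g k))"
  using coeff_smooth[of k] by (simp_all add: smooth2_differentiable)

lemma differentiable [simp]:
  "x_differentiable (F z)" "x_differentiable (G z)" "x_differentiable (H z)"
  "x_differentiable (Ft z)" "x_differentiable (Gt z)" "x_differentiable (Ht z)"
  "t_differentiable (F z)" "t_differentiable (G z)" "t_differentiable (H z)"
  "x_differentiable (pt (F z))" "x_differentiable (pt (G z))"
  "t_differentiable (px u)"
  using u_smooth
  by (simp_all add: F_def G_def H_def Ft_def Gt_def Ht_def pt_polyz smooth2_differentiable)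

definition F_defect where "F_defect z x t = pt (F z) x t - 2 * (G z x t * Ft z x t - Gt z x t * F z x t)"
definition G_defect where "G_defect z x t = z * pt (G z) x t - (F z x t * Ht z x t - Ft z x t * H z x t)"
definition H_defect where "H_defect z x t = pt (H z) x t - 2 * (Gt z x t * H z x t - G z x t * Ht z x t)"

text \<open>There is no hypothesis on the x-derivative of Gt; it cancels between u_xt and (Gt F)_x.\<close>

lemma px_F_defect: "px (F_defect z) x t = - \<i> * px u x t * F_defect z x t - 2 * \<i> * G_defect z x t"
proof -
  have "px (pt (F z)) x t = pt (px (F z)) x t"
    using coeff_smooth by (simp add: F_def px_pt_polyz)
  also have "\<dots> = - \<i> * pt (px u) x t * F z x t - \<i> * px u x t * pt (F z) x t - 2 * \<i> * z * pt (G z) x t"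
    by (simp add: eqF[abs_def] algebra_simps)
  finally show ?thesis
    unfolding F_defect_def[abs_def] G_defect_def
    by (simp add: equ[where z = z] eqFt eqF eqG algebra_simps)
qed

lemma px_G_defect: "px (G_defect z) x t = \<i> * z * (H_defect z x t - F_defect z x t)"
proof -
  have "px (pt (G z)) x t = pt (px (G z)) x t"
    using coeff_smooth by (simp add: G_def px_pt_polyz)
  also have "\<dots> = \<i> * (pt (H z) x t - pt (F z) x t)"
    by (simp add: eqG[abs_def] algebra_simps)
  finally have G_xt: "px (pt (G z)) x t = \<i> * (pt (H z) x t - pt (F z) x t)" .
  show ?thesis
    unfolding G_defect_def[abs_def] F_defect_def H_defect_def
    by (simp add: G_xt eqHt eqFt eqF eqH algebra_simps)
qed

lemma defect_relation:
  assumes "z \<noteq> 0"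
  shows "2 * G z x t * G_defect z x t + F z x t * H_defect z x t + H z x t * F_defect z x t = 0"
proof -
  have "(\<lambda>x t. z * z * (G z x t * G z x t) + z * F z x t * H z x t) = (\<lambda>x t. R z)"
    using invariant by (simp add: fun_eq_iff power2_eq_square)
  then have "pt (\<lambda>x t. z * z * (G z x t * G z x t) + z * F z x t * H z x t) x t = 0"
    by simp
  then have "z * (2 * G z x t * G_defect z x t + F z x t * H_defect z x t + H z x t * F_defect z x t) = 0"
    unfolding G_defect_def F_defect_def H_defect_def by (simp add: algebra_simps)
  with assms show ?thesis by simp
qed

definition F_defect_poly where
  "F_defect_poly x t = polyz_poly (\<lambda>k. pt (f k)) (Suc n) x t
     - smult 2 (polyz_poly g n x t * polyz_poly ft (Suc r) x t - polyz_poly gt r x t * polyz_poly f (Suc n) x t)"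

definition G_defect_poly where
  "G_defect_poly x t = pCons 0 (polyz_poly (\<lambda>k. pt (g k)) n x t)
     - (polyz_poly f (Suc n) x t * polyz_poly ht (Suc r) x t - polyz_poly ft (Suc r) x t * polyz_poly h (Suc n) x t)"

definition H_defect_poly where
  "H_defect_poly x t = polyz_poly (\<lambda>k. pt (h k)) (Suc n) x t
     - smult 2 (polyz_poly gt r x t * polyz_poly h (Suc n) x t - polyz_poly g n x t * polyz_poly ht (Suc r) x t)"

lemma defects_vanish: "F_defect z x t = 0 \<and> G_defect z x t = 0 \<and> H_defect z x t = 0"
proof -
  have "G_defect z x t = 0 \<and> F_defect z x t = 0 \<and> H_defect z x t = 0"
  proof (rule defects_vanish_by_descent[where A = G_defect and B = F_defect and C = H_defect
        and PA = G_defect_poly and PB = F_defect_poly and PC = H_defect_poly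
        and PF = "polyz_poly f (Suc n)" and PG = "polyz_poly g n" and PH = "polyz_poly h (Suc n)"
        and n = n and w = "\<lambda>x t. - \<i> * px u x t"])
    show "G_defect z = (\<lambda>x t. poly (G_defect_poly x t) z)"
      and "F_defect z = (\<lambda>x t. poly (F_defect_poly x t) z)"
      and "H_defect z = (\<lambda>x t. poly (H_defect_poly x t) z)" for z
      unfolding fun_eq_iff G_defect_def G_defect_poly_def F_defect_def F_defect_poly_def H_defect_def
        H_defect_poly_def
      by (simp_all add: F_def G_def H_def Ft_def Gt_def Ht_def pt_polyz)
    show "x_differentiable_coeffs G_defect_poly" "x_differentiable_coeffs F_defect_poly"
      by (simp_all add: G_defect_poly_def[abs_def] F_defect_poly_def[abs_def])
    show "bounded_degree G_defect_poly" "bounded_degree F_defect_poly" "bounded_degree H_defect_poly"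
      by (simp_all add: G_defect_poly_def[abs_def] F_defect_poly_def[abs_def] H_defect_poly_def[abs_def])
    show "degree (polyz_poly f (Suc n) x t) \<le> n" "degree (polyz_poly h (Suc n) x t) \<le> n" for x t
      using degree_polyz_poly[of _ "Suc n" x t] by simp_all
    show "degree (polyz_poly g n x t) < n" for x t
      using degree_polyz_poly[of g n x t] n_pos by linarith
  qed (simp_all add: F_monic H_monic px_F_defect px_G_defect defect_relation
      flip: F_def G_def H_def)
  then show ?thesis by blast
qed

end

theorem lemma4p2:
  fixes n r :: nat
    and u :: "real \<Rightarrow> real \<Rightarrow> complex"
    and f g h ft gt ht :: "nat \<Rightarrow> real \<Rightarrow> real \<Rightarrow> complex"
    and E :: "nat \<Rightarrow> complex"
  defines "F \<equiv> polyz f (Suc n)" and "G \<equiv> polyz g n" and "H \<equiv> polyz h (Suc n)"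
      and "Ft \<equiv> polyz ft (Suc r)" and "Gt \<equiv> polyz gt r" and "Ht \<equiv> polyz ht (Suc r)"
  assumes n_pos: "n \<ge> 1"
    and u_smooth: "smooth2 u"
    and coeff_smooth: "\<And>k. smooth2 (f k) \<and> smooth2 (g k) \<and> smooth2 (h k)
                             \<and> smooth2 (ft k) \<and> smooth2 (gt k) \<and> smooth2 (ht k)"
    and F_monic: "\<And>x t. f n x t = 1"
    and H_monic: "\<And>x t. h n x t = 1"
    and Ft_deg: "ft r \<noteq> (\<lambda>x t. 0)"
    and Ht_deg: "ht r \<noteq> (\<lambda>x t. 0)"
    and eqF: "\<And>z x t. px (F z) x t = - \<i> * px u x t * F z x t - 2 * \<i> * z * G z x t"
    and eqH: "\<And>z x t. px (H z) x t = \<i> * px u x t * H z x t + 2 * \<i> * z * G z x t"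
    and eqG: "\<And>z x t. px (G z) x t = \<i> * (H z x t - F z x t)"
    and equ: "\<And>z x t. pt (px u) x t = - 2 * \<i> * px (Gt z) x t - 2 * (Ht z x t - Ft z x t)"
    and eqFt: "\<And>z x t. px (Ft z) x t = - \<i> * px u x t * Ft z x t - 2 * \<i> * z * Gt z x t"
    and eqHt: "\<And>z x t. px (Ht z) x t = \<i> * px u x t * Ht z x t + 2 * \<i> * z * Gt z x t"
    and E0: "E 0 = 0"
    and Enz: "\<And>m. 1 \<le> m \<Longrightarrow> m \<le> 2 * n \<Longrightarrow> E m \<noteq> 0"
    and constraint: "\<And>z x t. z\<^sup>2 * (G z x t)\<^sup>2 + z * F z x t * H z x t
                              = (\<Prod>m\<le>2 * n. z - E m)"
  shows "(\<forall>z x t. pt (F z) x t = 2 * (G z x t * Ft z x t - Gt z x t * F z x t)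
              \<and> z * pt (G z) x t = F z x t * Ht z x t - Ft z x t * H z x t
              \<and> pt (H z) x t = 2 * (Gt z x t * H z x t - G z x t * Ht z x t))
       \<and> ((\<forall>z x t. pt (F z) x t = 2 * (G z x t * Ft z x t - Gt z x t * F z x t)
              \<and> z * pt (G z) x t = F z x t * Ht z x t - Ft z x t * H z x t
              \<and> pt (H z) x t = 2 * (Gt z x t * H z x t - G z x t * Ht z x t))
          \<longleftrightarrow>
          (\<forall>z. z \<noteq> 0 \<longrightarrow> (\<forall>x t.
              mat_pt (\<lambda>x' t'. mat2 (- G z x' t') (F z x' t' / z) (H z x' t') (G z x' t')) x t
              = commut (mat2 (- Gt z x t) (Ft z x t / z) (Ht z x t) (Gt z x t))
                       (mat2 (- G z x t) (F z x t / z) (H z x t) (G z x t)))))"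
proof -
  interpret lax: lax_pair_polynomials n r u f g h ft gt ht F G H Ft Gt Ht "\<lambda>z. \<Prod>m\<le>2 * n. z - E m"
    by unfold_locales (fact assms | simp add: F_def G_def H_def Ft_def Gt_def Ht_def)+
  have lax_equations: "\<forall>z x t. pt (F z) x t = 2 * (G z x t * Ft z x t - Gt z x t * F z x t)
              \<and> z * pt (G z) x t = F z x t * Ht z x t - Ft z x t * H z x t
              \<and> pt (H z) x t = 2 * (Gt z x t * H z x t - G z x t * Ht z x t)"
    using lax.defects_vanish unfolding lax.F_defect_def lax.G_defect_def lax.H_defect_def by simp
  moreover have "mat_pt (\<lambda>x' t'. mat2 (- G z x' t') (F z x' t' / z) (H z x' t') (G z x' t')) x t
      = commut (mat2 (- Gt z x t) (Ft z x t / z) (Ht z x t) (Gt z x t))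
               (mat2 (- G z x t) (F z x t / z) (H z x t) (G z x t))" if "z \<noteq> 0" for z x t
    using lax_equations by (simp add: zero_curvature_iff that)
  ultimately show ?thesis by blast
qed

end
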